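(* Let $(q_n)$ be the Fibonacci Quilt sequence and for $n\ge1$ let $h_n$ be the number of integers $m\in[1,q_{n+1}-1]$ for which the greedy decomposition of $m$ is an FQ-legal decomposition. Then $h_k=k$ for $1\le k\le5$, and for all $n\ge6$, \[ h_n=h_{n-1}+h_{n-5}+1. \]
   Context: Given an increasing sequence of positive integers $(q_i)_{i\ge1}$, an FQ-legal decomposition of an integer $m\ge0$ is an expression $m=q_{\ell_1}+q_{\ell_2}+\cdots+q_{\ell_t}$ ($t\ge0$, the empty sum representing $0$) with distinct indices $\ell_1>\ell_2>\cdots>\ell_t$ such that $|\ell_i-\ell_j|\notin\{1,3,4\}$ for all $i,j$, and $\{1,3\}\not\subset\{\ell_1,\dots,\ell_t\}$. The Fibonacci Quilt sequence is the increasing sequence of positive integers $(q_i)_{i\ge1}$ in which each $q_i$ is the smallest positive integer having no FQ-legal decomposition using only $q_1,\dots,q_{i-1}$. Its first terms are $1,2,3,4,5,7,9,12,16,21,28,37,49,\dots$. The greedy decomposition of a positive integer $m$ is obtained by choosing the largest $q_k\le m$ as a summand and, if $m-q_k>0$, recursively appending the greedy decomposition of $m-q_k$; the greedy algorithm succeeds on $m$ if the resulting decomposition is FQ-legal. *)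

theory Defs
  imports Main
begin

definition FQ_legal_set :: "nat set \<Rightarrow> bool" where
  "FQ_legal_set S \<longleftrightarrow> finite S \<and> (\<forall>i\<in>S. 1 \<le> i)
     \<and> (\<forall>i\<in>S. \<forall>j\<in>S. nat \<bar>int i - int j\<bar> \<notin> {1, 3, 4})
     \<and> \<not> ({1, 3} \<subseteq> S)"

definition FQ_representable :: "nat list \<Rightarrow> nat \<Rightarrow> bool" where
  "FQ_representable xs m \<longleftrightarrow>
     (\<exists>S. S \<subseteq> {1..length xs} \<and> FQ_legal_set S \<and> (\<Sum>i\<in>S. xs ! (i - 1)) = m)"

primrec FQ_list :: "nat \<Rightarrow> nat list" where
  "FQ_list 0 = []"
| "FQ_list (Suc n) = FQ_list n @ [LEAST m. 0 < m \<and> \<not> FQ_representable (FQ_list n) m]"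

text \<open>The Fibonacci Quilt sequence q_i, for i \<ge> 1 (the value at 0 is irrelevant).\<close>
definition FQ :: "nat \<Rightarrow> nat" where
  "FQ i = FQ_list i ! (i - 1)"

text \<open>The fuel argument is only for termination; with fuel m it computes the full
  greedy decomposition of m, since each step decreases m by at least 1.\<close>
primrec greedy_aux :: "nat \<Rightarrow> nat \<Rightarrow> nat list" where
  "greedy_aux 0 m = []"
| "greedy_aux (Suc f) m =
     (if m = 0 then []
      else (let k = (GREATEST k. 1 \<le> k \<and> FQ k \<le> m) in k # greedy_aux f (m - FQ k)))"

definition greedy :: "nat \<Rightarrow> nat list" where
  "greedy m = greedy_aux m m"

definition greedy_succeeds :: "nat \<Rightarrow> bool" where
  "greedy_succeeds m \<longleftrightarrow> distinct (greedy m) \<and> FQ_legal_set (set (greedy m))"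

definition h :: "nat \<Rightarrow> nat" where
  "h n = card {m. 1 \<le> m \<and> m \<le> FQ (n + 1) - 1 \<and> greedy_succeeds m}"

end

theory Submission
  imports Defs
begin

(* The Fibonacci Quilt numbers q(n) = quilt n satisfy q(n) = q(n-2) + q(n-3) for n >= 5, i.e.
   q(n+1) = q(n) + q(n-4) for n >= 6. In a legal index set every index below the largest one j
   is j-2 or at most j-5. Peeling off the top one or two indices shows by induction that legal
   sums of terms with indices at most j stay below q(j+3), that q(n+1) is never a legal sum of
   q(1), ..., q(n), while every smaller number is; this identifies the sequence.
   For n >= 6 and q(n) <= m < q(n+1), greedy takes q(n) and leaves r < q(n-4), whose greedy
   indices are at most n-5 and never conflict with n, so greedy succeeds on m iff it succeeds
   on r. Hence the successes below q(n+1) are those below q(n) together with q(n) + (successes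
   below q(n-4), including 0), which gives h(n) = h(n-1) + h(n-5) + 1. *)

function quilt :: "nat \<Rightarrow> nat" where
  "quilt n = (if n \<le> 4 then n else quilt (n - 2) + quilt (n - 3))"
  by auto
termination by (relation "measure id") auto

declare quilt.simps [simp del]

lemma quilt_small: "n \<le> 5 \<Longrightarrow> quilt n = n"
  by (cases "n = 5") (simp_all add: quilt.simps)

lemma quilt_rec: "5 \<le> n \<Longrightarrow> quilt n = quilt (n - 2) + quilt (n - 3)"
  by (subst quilt.simps) simp

lemma quilt_6: "quilt 6 = 7"
  using quilt_rec[of 6] by (simp add: quilt_small)

lemma quilt_pos: "1 \<le> n \<Longrightarrow> 0 < quilt n"
proof (induction n rule: less_induct)
  case (less n)
  show ?case
  proof (cases "n \<le> 4")
    case True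
    then show ?thesis using less.prems by (simp add: quilt_small)
  next
    case False
    then show ?thesis using less.IH[of "n - 2"] quilt_rec[of n] by simp
  qed
qed

lemma quilt_shift: "6 \<le> n \<Longrightarrow> quilt (n + 1) = quilt n + quilt (n - 4)"
  using quilt_rec[of "n + 1"] quilt_rec[of n] quilt_rec[of "n - 1"]
  by (simp add: numeral_eq_Suc)

lemma strict_mono_quilt: "strict_mono quilt"
proof (rule strict_mono_Suc_iff[THEN iffD2], intro allI)
  fix n
  show "quilt n < quilt (Suc n)"
  proof (cases "n \<le> 5")
    case True
    then have "n \<in> {0, 1, 2, 3, 4, 5}" by auto
    then show ?thesis by (auto simp: quilt_6 quilt_small)
  next
    case False
    then show ?thesis using quilt_shift[of n] quilt_pos[of "n - 4"] by simp
  qed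
qed

lemma quilt_less_iff [simp]: "quilt a < quilt b \<longleftrightarrow> a < b"
  using strict_mono_quilt by (rule strict_mono_less)

lemma quilt_le_iff [simp]: "quilt a \<le> quilt b \<longleftrightarrow> a \<le> b"
  using strict_mono_quilt by (rule strict_mono_less_eq)

lemma quilt_eq_iff [simp]: "quilt a = quilt b \<longleftrightarrow> a = b"
  using strict_mono_quilt strict_mono_eq by blast

lemma FQ_legal_set_iff:
  "FQ_legal_set S \<longleftrightarrow> finite S \<and> 0 \<notin> S
     \<and> (\<forall>i\<in>S. \<forall>j\<in>S. i < j \<longrightarrow> j - i \<notin> {1, 3, 4}) \<and> \<not> {1, 3} \<subseteq> S"
proof -
  have dist: "nat \<bar>int i - int j\<bar> = (if i \<le> j then j - i else i - j)" for i j :: nat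
    by auto
  have "(\<forall>i\<in>S. \<forall>j\<in>S. nat \<bar>int i - int j\<bar> \<notin> {1, 3, 4})
      \<longleftrightarrow> (\<forall>i\<in>S. \<forall>j\<in>S. i < j \<longrightarrow> j - i \<notin> {1, 3, 4})"
    unfolding dist
    by (metis diff_self_eq_0 linorder_not_le nat_less_le zero_neq_numeral zero_neq_one
        insert_iff empty_iff)
  moreover have "(\<forall>i\<in>S. 1 \<le> i) \<longleftrightarrow> 0 \<notin> S"
    by (metis not_one_le_zero less_one not_less)
  ultimately show ?thesis
    unfolding FQ_legal_set_def by blast
qed

lemma FQ_legal_set_subset: "FQ_legal_set S \<Longrightarrow> T \<subseteq> S \<Longrightarrow> FQ_legal_set T"
  unfolding FQ_legal_set_iff by (meson finite_subset subset_eq)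

lemma FQ_legal_set_empty: "FQ_legal_set {}"
  by (simp add: FQ_legal_set_iff)

lemma FQ_legal_set_singleton: "FQ_legal_set {n} \<longleftrightarrow> 1 \<le> n"
  by (auto simp: FQ_legal_set_iff)

lemma FQ_legal_set_insert_far:
  assumes "FQ_legal_set T" "T \<subseteq> {1..n - 5}" "1 \<le> n"
  shows "FQ_legal_set (insert n T)"
proof -
  have "\<forall>i\<in>T. i + 5 \<le> n" using assms(2) by fastforce
  then show ?thesis using assms(1,3) unfolding FQ_legal_set_iff by fastforce
qed

lemma FQ_legal_gap:
  assumes "FQ_legal_set S" "i \<in> S" "j \<in> S" "i < j"
  shows "i + 2 = j \<or> i + 5 \<le> j"
proof -
  have "j - i \<notin> {1, 3, 4}" using assms unfolding FQ_legal_set_iff by blast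
  then show ?thesis using assms(4) by auto
qed

lemma FQ_legal_gap_pair:
  assumes "FQ_legal_set S" "i \<in> S" "j \<in> S" "j + 2 \<in> S" "i < j"
  shows "i + 5 \<le> j"
  using FQ_legal_gap[OF assms(1,2,3,5)] FQ_legal_gap[OF assms(1,2,4)] assms(5) by linarith

lemma FQ_legal_top_cases:
  assumes legal: "FQ_legal_set S" and S: "S \<subseteq> {1..j}" and top: "j \<in> S"
  obtains "S - {j} \<subseteq> {1..j - 5}"
    | "4 \<le> j" "j - 2 \<in> S" "S - {j, j - 2} \<subseteq> {1..j - 7}"
proof (cases "2 \<le> j \<and> j - 2 \<in> S")
  case True
  then have "j - 2 \<noteq> 0" "j \<noteq> 3"
    using legal top unfolding FQ_legal_set_iff by auto
  then have "4 \<le> j" using True by linarith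
  moreover have "S - {j, j - 2} \<subseteq> {1..j - 7}"
  proof
    fix i assume i: "i \<in> S - {j, j - 2}"
    then have "i < j - 2"
      using FQ_legal_gap[OF legal _ top] S by fastforce
    moreover have "j - 2 + 2 \<in> S" using top True by (metis le_add_diff_inverse2)
    ultimately have "i + 5 \<le> j - 2"
      using FQ_legal_gap_pair[OF legal _ _ _] True i by blast
    then show "i \<in> {1..j - 7}" using i S by auto
  qed
  ultimately show ?thesis using True that by blast
next
  case False
  have "S - {j} \<subseteq> {1..j - 5}"
  proof
    fix i assume i: "i \<in> S - {j}"
    then have "i < j" using S by fastforce
    then have "i + 5 \<le> j"
      using FQ_legal_gap[OF legal _ top] i False by fastforce
    then show "i \<in> {1..j - 5}" using i S by auto
  qed
  then show ?thesis using that by blast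
qed

lemma sum_remove_two:
  assumes "finite S" "a \<in> S" "b \<in> S" "a \<noteq> b"
  shows "sum f S = f a + f b + sum f (S - {a, b})"
proof -
  have "sum f S = f a + sum f (S - {a})" using assms(1,2) by (rule sum.remove)
  also have "sum f (S - {a}) = f b + sum f (S - {a} - {b})"
    using assms by (intro sum.remove) auto
  also have "S - {a} - {b} = S - {a, b}" by blast
  finally show ?thesis by (simp only: add.assoc)
qed

lemma subset_atLeastAtMost_pred:
  fixes S :: "nat set"
  assumes "S \<subseteq> {1..j}" "j \<notin> S"
  shows "S \<subseteq> {1..j - 1}"
proof
  fix i assume "i \<in> S"
  with assms have "1 \<le> i" "i \<le> j" "i \<noteq> j" by auto
  then show "i \<in> {1..j - 1}" by simp
qed

lemma nonempty_subset_atLeastAtMost_diff: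
  fixes T :: "nat set"
  assumes "T \<noteq> {}" "T \<subseteq> {1..n - d}"
  shows "d < n"
proof -
  obtain i where "i \<in> T" using assms(1) by blast
  with assms(2) have "1 \<le> i" "i \<le> n - d" by auto
  then show ?thesis by arith
qed

lemma FQ_legal_sum_less_top:
  assumes smaller: "\<And>i T. i < j \<Longrightarrow> T \<subseteq> S \<Longrightarrow> T \<subseteq> {1..i} \<Longrightarrow> sum quilt T < quilt (i + 3)"
    and legal: "FQ_legal_set S" and S: "S \<subseteq> {1..j}" and top: "j \<in> S"
  shows "sum quilt S < quilt (j + 3)"
proof -
  have fin: "finite S" using legal by (simp add: FQ_legal_set_iff)
  from legal S top show ?thesis
  proof (cases rule: FQ_legal_top_cases)
    case 1
    have rest: "sum quilt (S - {j}) < quilt (j + 1)"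
    proof (cases "S - {j} = {}")
      case False
      then have "5 < j" using 1 by (rule nonempty_subset_atLeastAtMost_diff)
      then have "sum quilt (S - {j}) < quilt (j - 5 + 3)" using smaller[of "j - 5" "S - {j}"] 1 by simp
      also have "\<dots> \<le> quilt (j + 1)" using \<open>5 < j\<close> by simp
      finally show ?thesis .
    next
      case True
      show ?thesis unfolding True by (simp add: quilt_pos)
    qed
    have "quilt j + quilt (j + 1) \<le> quilt (j + 3)"
    proof (cases "2 \<le> j")
      case True
      then show ?thesis using quilt_rec[of "j + 3"] by simp
    next
      case False
      then show ?thesis using quilt_small[of j] quilt_small[of "j + 1"] quilt_small[of "j + 3"] by simp
    qed
    then show ?thesis using rest sum.remove[OF fin top, of quilt] by simp
  next
    case 2
    have rest: "sum quilt (S - {j, j - 2}) < quilt (j - 1)"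
    proof (cases "S - {j, j - 2} = {}")
      case False
      then have "7 < j" using 2(3) by (rule nonempty_subset_atLeastAtMost_diff)
      then have "sum quilt (S - {j, j - 2}) < quilt (j - 7 + 3)"
        using smaller[of "j - 7" "S - {j, j - 2}"] 2 by simp
      also have "\<dots> \<le> quilt (j - 1)" using \<open>7 < j\<close> by simp
      finally show ?thesis .
    next
      case True
      show ?thesis unfolding True using 2 by (simp add: quilt_pos)
    qed
    have "quilt (j + 3) = quilt (j - 1) + quilt (j - 2) + quilt j"
      using quilt_rec[of "j + 3"] quilt_rec[of "j + 1"] 2 by simp
    then show ?thesis using rest sum_remove_two[OF fin top 2(2), of quilt] 2(1) by simp
  qed
qed

lemma FQ_legal_sum_less:
  "FQ_legal_set S \<Longrightarrow> S \<subseteq> {1..j} \<Longrightarrow> sum quilt S < quilt (j + 3)"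
proof (induction j arbitrary: S rule: less_induct)
  case (less j)
  note legal = less.prems(1) and S = less.prems(2)
  have smaller: "sum quilt T < quilt (i + 3)" if "i < j" "T \<subseteq> S" "T \<subseteq> {1..i}" for i T
    using less.IH[OF that(1) FQ_legal_set_subset[OF legal that(2)] that(3)] .
  show ?case
  proof (cases "j \<in> S")
    case True
    with smaller legal S show ?thesis by (rule FQ_legal_sum_less_top)
  next
    case False
    with S have S': "S \<subseteq> {1..j - 1}" by (rule subset_atLeastAtMost_pred)
    show ?thesis
    proof (cases "S = {}")
      case False
      then have "1 \<le> j - 1" using S' by auto
      then have "sum quilt S < quilt (j - 1 + 3)" using smaller[of "j - 1" S] S' by simp
      also have "\<dots> \<le> quilt (j + 3)" by simp
      finally show ?thesis .
    qed (simp add: quilt_pos)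
  qed
qed

lemma FQ_legal_sum_neq_top:
  assumes smaller: "\<And>i T. i < k \<Longrightarrow> T \<subseteq> S \<Longrightarrow> T \<subseteq> {1..i} \<Longrightarrow> sum quilt T \<noteq> quilt (i + 1)"
    and legal: "FQ_legal_set S" and S: "S \<subseteq> {1..k}" and top: "k \<in> S"
  shows "sum quilt S \<noteq> quilt (k + 1)"
proof -
  have fin: "finite S" using legal by (simp add: FQ_legal_set_iff)
  from legal S top show ?thesis
  proof (cases rule: FQ_legal_top_cases)
    case 1
    show ?thesis
    proof (cases "S - {k} = {}")
      case True
      have "sum quilt S = quilt k + sum quilt (S - {k})" by (rule sum.remove[OF fin top])
      also have "\<dots> = quilt k" unfolding True by simp
      finally show ?thesis by simp
    next
      case False
      then have "5 < k" using 1 by (rule nonempty_subset_atLeastAtMost_diff)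
      then have "sum quilt (S - {k}) \<noteq> quilt (k - 4)"
        using smaller[of "k - 5" "S - {k}"] 1 by (simp add: Suc_diff_Suc numeral_eq_Suc)
      then show ?thesis
        using quilt_shift[of k] sum.remove[OF fin top, of quilt] \<open>5 < k\<close> by simp
    qed
  next
    case 2
    have "quilt (k + 1) = quilt (k - 1) + quilt (k - 2)"
      using quilt_rec[of "k + 1"] 2 by simp
    moreover have "quilt (k - 1) < quilt k" using 2 by simp
    moreover have "sum quilt S \<ge> quilt k + quilt (k - 2)"
      using sum_remove_two[OF fin top 2(2), of quilt] 2(1) by simp
    ultimately show ?thesis by linarith
  qed
qed

lemma FQ_legal_sum_neq_second:
  assumes smaller: "\<And>i T. i < k \<Longrightarrow> T \<subseteq> S \<Longrightarrow> T \<subseteq> {1..i} \<Longrightarrow> sum quilt T \<noteq> quilt (i + 1)"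
    and legal: "FQ_legal_set S" and S: "S \<subseteq> {1..k - 1}" and second: "k - 1 \<in> S" "2 \<le> k"
  shows "sum quilt S \<noteq> quilt (k + 1)"
proof -
  have fin: "finite S" using legal by (simp add: FQ_legal_set_iff)
  from legal S second(1) show ?thesis
  proof (cases rule: FQ_legal_top_cases)
    case 1
    have split: "sum quilt S = quilt (k - 1) + sum quilt (S - {k - 1})"
      by (rule sum.remove[OF fin second(1)])
    have "sum quilt S < quilt (k + 1)"
    proof (cases "S - {k - 1} = {}")
      case True
      show ?thesis unfolding split True using second by simp
    next
      case False
      then have "5 < k - 1" using 1 by (rule nonempty_subset_atLeastAtMost_diff)
      then have "sum quilt (S - {k - 1}) < quilt (k - 1 - 5 + 3)"
        using FQ_legal_sum_less[OF FQ_legal_set_subset[OF legal] 1] by simp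
      also have "\<dots> \<le> quilt (k - 2)" using \<open>5 < k - 1\<close> by simp
      finally show ?thesis
        using split quilt_rec[of "k + 1"] \<open>5 < k - 1\<close> by simp
    qed
    then show ?thesis by simp
  next
    case 2
    have "k - 1 - 2 = k - 3" "k - 1 - 7 = k - 8" by arith+
    note two = 2[unfolded this]
    have split: "sum quilt S = quilt (k - 1) + quilt (k - 3) + sum quilt (S - {k - 1, k - 3})"
      using sum_remove_two[OF fin second(1) two(2), of quilt] two(1) by simp
    have top: "quilt (k + 1) = quilt (k - 1) + quilt (k - 2)"
      using quilt_rec[of "k + 1"] two(1) by simp
    show ?thesis
    proof (cases "S - {k - 1, k - 3} = {}")
      case True
      show ?thesis unfolding split True top using two(1) by simp
    next
      case False
      then have "8 < k" using two(3) by (rule nonempty_subset_atLeastAtMost_diff)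
      moreover have "k - 7 = k - 8 + 1" using \<open>8 < k\<close> by arith
      ultimately have "sum quilt (S - {k - 1, k - 3}) \<noteq> quilt (k - 7)"
        using smaller[of "k - 8" "S - {k - 1, k - 3}"] two(3) by simp
      moreover have "quilt (k - 2) = quilt (k - 3) + quilt (k - 7)"
      proof -
        have "k - 2 = k - 3 + 1" "6 \<le> k - 3" "k - 3 - 4 = k - 7" using \<open>8 < k\<close> by arith+
        then show ?thesis using quilt_shift[of "k - 3"] by simp
      qed
      ultimately show ?thesis using split top by simp
    qed
  qed
qed

lemma FQ_legal_sum_neq:
  "FQ_legal_set S \<Longrightarrow> S \<subseteq> {1..k} \<Longrightarrow> sum quilt S \<noteq> quilt (k + 1)"
proof (induction k arbitrary: S rule: less_induct)
  case (less k)
  note legal = less.prems(1) and S = less.prems(2)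
  have smaller: "sum quilt T \<noteq> quilt (i + 1)" if "i < k" "T \<subseteq> S" "T \<subseteq> {1..i}" for i T
    using less.IH[OF that(1) FQ_legal_set_subset[OF legal that(2)] that(3)] .
  show ?case
  proof (cases "k \<in> S")
    case True
    with smaller legal S show ?thesis by (rule FQ_legal_sum_neq_top)
  next
    case False
    with S have S1: "S \<subseteq> {1..k - 1}" by (rule subset_atLeastAtMost_pred)
    show ?thesis
    proof (cases "k - 1 \<in> S")
      case True
      then have "2 \<le> k" using S1 by auto
      with smaller legal S1 True show ?thesis by (rule FQ_legal_sum_neq_second)
    next
      case False
      with S1 have "S \<subseteq> {1..k - 1 - 1}" by (rule subset_atLeastAtMost_pred)
      then have low: "S \<subseteq> {1..k - 2}" by (metis diff_diff_left one_add_one)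
      show ?thesis
      proof (cases "S = {}")
        case False
        then have "2 < k" using low by (rule nonempty_subset_atLeastAtMost_diff)
        then show ?thesis using FQ_legal_sum_less[OF legal low] by simp
      qed (simp add: quilt_pos)
    qed
  qed
qed

lemma FQ_legal_sum_exists_small:
  assumes "n \<le> 5" "m < quilt (n + 1)"
  shows "\<exists>S \<subseteq> {1..n}. FQ_legal_set S \<and> sum quilt S = m"
proof -
  have "m \<le> n \<or> n = 5 \<and> m = 6"
  proof (cases "n = 5")
    case True
    then show ?thesis using assms(2) by (simp add: quilt_6) presburger
  next
    case False
    then show ?thesis using assms quilt_small[of "n + 1"] by simp
  qed
  then consider "m = 0" | "1 \<le> m" "m \<le> n" | "n = 5" "m = 6" by linarith
  then show ?thesis
  proof cases
    case 1
    then show ?thesis using FQ_legal_set_empty by (intro exI[of _ "{}"]) auto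
  next
    case 2
    then show ?thesis using FQ_legal_set_singleton[of m] quilt_small[of m] assms(1)
      by (intro exI[of _ "{m}"]) auto
  next
    case 3
    have "FQ_legal_set {2, 4 :: nat}" "sum quilt {2, 4 :: nat} = 6"
      by (simp_all add: FQ_legal_set_iff quilt_small)
    then show ?thesis using 3 by (intro exI[of _ "{2, 4}"]) auto
  qed
qed

lemma FQ_legal_sum_exists:
  "m < quilt (n + 1) \<Longrightarrow> \<exists>S \<subseteq> {1..n}. FQ_legal_set S \<and> sum quilt S = m"
proof (induction n arbitrary: m rule: less_induct)
  case (less n)
  show ?case
  proof (cases "6 \<le> n")
    case False
    then show ?thesis using FQ_legal_sum_exists_small less.prems by simp
  next
    case True
    show ?thesis
    proof (cases "m < quilt n")
      case below: True
      then obtain S where "S \<subseteq> {1..n - 1}" "FQ_legal_set S" "sum quilt S = m"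
        using less.IH[of "n - 1" m] True by auto
      moreover have "{1..n - 1} \<subseteq> {1..n}" by auto
      ultimately show ?thesis by blast
    next
      case False
      have "m - quilt n < quilt (n - 5 + 1)"
        using less.prems quilt_shift[of n] True False by (simp add: Suc_diff_Suc numeral_eq_Suc)
      then obtain T where T: "T \<subseteq> {1..n - 5}" "FQ_legal_set T" "sum quilt T = m - quilt n"
        using less.IH[of "n - 5"] True by auto
      have "n \<notin> T" using T(1) True by auto
      then have "sum quilt (insert n T) = m"
        using T False FQ_legal_set_iff by simp
      moreover have "insert n T \<subseteq> {1..n}" using T(1) True by (auto simp: subset_iff)
      ultimately show ?thesis
        using FQ_legal_set_insert_far[OF T(2,1)] True by (intro exI[of _ "insert n T"]) simp
    qed
  qed
qed

lemma FQ_representable_quilt_iff: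
  "FQ_representable (map quilt [1..<n + 1]) m
    \<longleftrightarrow> (\<exists>S \<subseteq> {1..n}. FQ_legal_set S \<and> sum quilt S = m)"
proof -
  have nth: "map quilt [1..<n + 1] ! (i - 1) = quilt i" if "i \<in> {1..n}" for i
  proof -
    have "1 \<le> i" "i - 1 < n" using that by auto
    then show ?thesis by (simp del: upt_Suc)
  qed
  have "(\<Sum>i\<in>S. map quilt [1..<n + 1] ! (i - 1)) = sum quilt S" if "S \<subseteq> {1..n}" for S
    using that nth by (intro sum.cong) auto
  then show ?thesis unfolding FQ_representable_def by auto
qed

lemma FQ_list_eq_quilt: "FQ_list n = map quilt [1..<n + 1]"
proof (induction n)
  case (Suc n)
  have "(LEAST m. 0 < m \<and> \<not> FQ_representable (FQ_list n) m) = quilt (n + 1)"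
  proof (rule Least_equality)
    show "0 < quilt (n + 1) \<and> \<not> FQ_representable (FQ_list n) (quilt (n + 1))"
      unfolding Suc FQ_representable_quilt_iff using FQ_legal_sum_neq quilt_pos by auto
    show "quilt (n + 1) \<le> m" if "0 < m \<and> \<not> FQ_representable (FQ_list n) m" for m
      using that FQ_legal_sum_exists[of m n] unfolding Suc FQ_representable_quilt_iff by force
  qed
  then show ?case using Suc by simp
qed simp

lemma FQ_eq_quilt: "1 \<le> k \<Longrightarrow> FQ k = quilt k"
  unfolding FQ_def FQ_list_eq_quilt by (simp del: upt_Suc)

lemma quilt_bracket: "1 \<le> m \<Longrightarrow> \<exists>k\<ge>1. quilt k \<le> m \<and> m < quilt (k + 1)"
proof (induction m rule: nat_induct_at_least)
  case base
  show ?case by (intro exI[of _ 1]) (simp add: quilt_small)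
next
  case (Suc m)
  then obtain k where k: "1 \<le> k" "quilt k \<le> m" "m < quilt (k + 1)" by blast
  show ?case
  proof (cases "Suc m < quilt (k + 1)")
    case True
    then show ?thesis using k by (intro exI[of _ k]) simp
  next
    case False
    then have "quilt (k + 1) = Suc m" using k(3) by simp
    moreover have "quilt (k + 1) < quilt (k + 2)" by simp
    ultimately show ?thesis by (intro exI[of _ "k + 1"]) simp
  qed
qed

lemma greatest_FQ_le:
  assumes "1 \<le> k" "quilt k \<le> m" "m < quilt (k + 1)"
  shows "(GREATEST k. 1 \<le> k \<and> FQ k \<le> m) = k"
proof (rule Greatest_equality)
  show "1 \<le> k \<and> FQ k \<le> m" using assms FQ_eq_quilt by simp
  show "y \<le> k" if "1 \<le> y \<and> FQ y \<le> m" for y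
  proof -
    have "FQ y = quilt y" using that FQ_eq_quilt by blast
    then have "quilt y < quilt (k + 1)" using that assms(3) by linarith
    then show ?thesis by simp
  qed
qed

lemma greedy_aux_step:
  assumes "1 \<le> k" "quilt k \<le> m" "m < quilt (k + 1)"
  shows "greedy_aux (Suc f) m = k # greedy_aux f (m - quilt k)"
proof -
  have "0 < m" using assms quilt_pos[of k] by linarith
  then show ?thesis using greatest_FQ_le[OF assms] FQ_eq_quilt[OF assms(1)] by (simp add: Let_def)
qed

lemma greedy_aux_eq_greedy: "m \<le> f \<Longrightarrow> greedy_aux f m = greedy m"
proof (induction m arbitrary: f rule: less_induct)
  case (less m)
  show ?case
  proof (cases "m = 0")
    case True
    then show ?thesis by (cases f) (simp_all add: greedy_def)
  next
    case False
    then obtain k where k: "1 \<le> k" "quilt k \<le> m" "m < quilt (k + 1)"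
      using quilt_bracket[of m] by auto
    have rest: "m - quilt k < m" using k(1) quilt_pos[of k] False by simp
    have step: "greedy_aux (Suc g) m = k # greedy (m - quilt k)" if "m \<le> Suc g" for g
      using greedy_aux_step[OF k, of g] less.IH[OF rest, of g] that rest by simp
    obtain f' where f: "f = Suc f'" using less.prems False by (cases f) auto
    obtain m' where m: "m = Suc m'" using False by (cases m) auto
    have "greedy m = greedy_aux (Suc m') m" using m by (simp add: greedy_def)
    also have "\<dots> = greedy_aux f m" using step[of m'] step[of f'] less.prems m f by simp
    finally show ?thesis by simp
  qed
qed

lemma greedy_0: "greedy 0 = []"
  by (simp add: greedy_def)

lemma greedy_step:
  assumes "1 \<le> k" "quilt k \<le> m" "m < quilt (k + 1)"
  shows "greedy m = k # greedy (m - quilt k)"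
proof -
  have "0 < m" using assms quilt_pos[of k] by linarith
  then obtain m' where m: "m = Suc m'" by (cases m) auto
  have "m - quilt k \<le> m'" using m assms(1) quilt_pos[of k] by simp
  have "greedy m = greedy_aux (Suc m') m" using m by (simp add: greedy_def)
  also have "\<dots> = k # greedy_aux m' (m - quilt k)" by (rule greedy_aux_step[OF assms])
  also have "greedy_aux m' (m - quilt k) = greedy (m - quilt k)"
    using \<open>m - quilt k \<le> m'\<close> by (rule greedy_aux_eq_greedy)
  finally show ?thesis .
qed

lemma set_greedy_subset: "r < quilt (j + 1) \<Longrightarrow> set (greedy r) \<subseteq> {1..j}"
proof (induction r rule: less_induct)
  case (less r)
  show ?case
  proof (cases "r = 0")
    case False
    then obtain k where k: "1 \<le> k" "quilt k \<le> r" "r < quilt (k + 1)"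
      using quilt_bracket[of r] by auto
    have "quilt k < quilt (j + 1)" using k(2) less.prems by linarith
    then have "k \<le> j" by simp
    moreover have "set (greedy (r - quilt k)) \<subseteq> {1..j}"
      using less.IH[of "r - quilt k"] less.prems k(1) quilt_pos[of k] False by simp
    ultimately show ?thesis using greedy_step[OF k] k(1) by simp
  qed (simp add: greedy_0)
qed

lemma greedy_quilt_add:
  assumes "1 \<le> n" "r < quilt (n + 1) - quilt n"
  shows "greedy (quilt n + r) = n # greedy r"
  using greedy_step[of n "quilt n + r"] assms by simp

lemma greedy_succeeds_quilt: "1 \<le> n \<Longrightarrow> greedy_succeeds (quilt n)"
  using greedy_quilt_add[of n 0] quilt_less_iff[of n "n + 1"]
  by (simp add: greedy_succeeds_def greedy_0 FQ_legal_set_singleton)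

lemma greedy_succeeds_quilt_add:
  assumes "6 \<le> n" "r < quilt (n - 4)"
  shows "greedy_succeeds (quilt n + r) \<longleftrightarrow> greedy_succeeds r"
proof -
  have greedy: "greedy (quilt n + r) = n # greedy r"
    using greedy_quilt_add[of n r] quilt_shift[of n] assms by simp
  have sub: "set (greedy r) \<subseteq> {1..n - 5}"
    using set_greedy_subset[of r "n - 5"] assms by (simp add: Suc_diff_Suc numeral_eq_Suc)
  then have "n \<notin> set (greedy r)" using assms(1) by auto
  moreover have "FQ_legal_set (insert n (set (greedy r))) \<longleftrightarrow> FQ_legal_set (set (greedy r))"
    using FQ_legal_set_insert_far[OF _ sub] FQ_legal_set_subset[OF _ subset_insertI] assms(1)
    by (metis le_trans one_le_numeral)
  ultimately show ?thesis unfolding greedy_succeeds_def greedy by simp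
qed

lemma not_greedy_succeeds_6: "\<not> greedy_succeeds 6"
proof -
  have "greedy (quilt 5 + 1) = [5, 1]"
    using greedy_quilt_add[of 5 1] greedy_quilt_add[of 1 0] quilt_6
    by (simp add: quilt_small greedy_0)
  moreover have "\<not> FQ_legal_set {5, 1}" by (simp add: FQ_legal_set_iff)
  ultimately show ?thesis by (simp add: greedy_succeeds_def quilt_small)
qed

definition greedy_successes :: "nat \<Rightarrow> nat set" where
  "greedy_successes n = {m. m < quilt (n + 1) \<and> greedy_succeeds m}"

lemma card_greedy_successes: "card (greedy_successes n) = h n + 1"
proof -
  have "greedy_successes n = insert 0 {m. 1 \<le> m \<and> m \<le> FQ (n + 1) - 1 \<and> greedy_succeeds m}"
    using FQ_eq_quilt[of "n + 1"] quilt_pos[of "n + 1"]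
    by (auto simp: greedy_successes_def greedy_succeeds_def greedy_0 FQ_legal_set_empty)
  then show ?thesis unfolding h_def by simp
qed

lemma greedy_successes_rec:
  assumes n: "6 \<le> n"
  shows "greedy_successes n = greedy_successes (n - 1) \<union> (+) (quilt n) ` greedy_successes (n - 5)"
proof (rule set_eqI)
  fix m
  have idx: "n - 1 + 1 = n" "n - 5 + 1 = n - 4" using n by auto
  show "m \<in> greedy_successes n \<longleftrightarrow>
      m \<in> greedy_successes (n - 1) \<union> (+) (quilt n) ` greedy_successes (n - 5)"
  proof (cases "m < quilt n")
    case True
    then show ?thesis
      using less_trans[OF True quilt_less_iff[of n "n + 1", THEN iffD2]]
      unfolding greedy_successes_def idx by auto
  next
    case False
    then obtain r where m: "m = quilt n + r" using le_Suc_ex by (metis not_less)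
    have "m \<in> greedy_successes n \<longleftrightarrow> r < quilt (n - 4) \<and> greedy_succeeds r"
      unfolding greedy_successes_def m using quilt_shift[OF n] greedy_succeeds_quilt_add[OF n] by auto
    also have "\<dots> \<longleftrightarrow> m \<in> (+) (quilt n) ` greedy_successes (n - 5)"
      unfolding greedy_successes_def idx m by auto
    moreover have "m \<notin> greedy_successes (n - 1)"
      using False unfolding greedy_successes_def idx by simp
    ultimately show ?thesis unfolding greedy_successes_def by blast
  qed
qed

lemma h_rec: "6 \<le> n \<Longrightarrow> h n = h (n - 1) + h (n - 5) + 1"
proof -
  assume n: "6 \<le> n"
  have fin: "finite (greedy_successes k)" for k
    unfolding greedy_successes_def by simp
  have "greedy_successes (n - 1) \<inter> (+) (quilt n) ` greedy_successes (n - 5) = {}"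
    using n unfolding greedy_successes_def by auto
  then have "card (greedy_successes n)
      = card (greedy_successes (n - 1)) + card (greedy_successes (n - 5))"
    using greedy_successes_rec[OF n] fin by (simp add: card_Un_disjoint card_image)
  then show ?thesis unfolding card_greedy_successes by simp
qed

lemma h_small: "n \<le> 5 \<Longrightarrow> h n = n"
proof -
  assume n: "n \<le> 5"
  have small: "greedy_succeeds m" if "m \<le> 5" for m
    using that greedy_succeeds_quilt[of m] quilt_small[of m]
    by (cases "m = 0") (auto simp: greedy_succeeds_def greedy_0 FQ_legal_set_empty)
  have "greedy_successes n = {0..n}"
  proof (cases "n = 5")
    case True
    have "m < 7 \<longleftrightarrow> m \<le> 5 \<or> m = 6" for m :: nat by arith
    then show ?thesis
      using True small not_greedy_succeeds_6 quilt_6 unfolding greedy_successes_def by auto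
  next
    case False
    then show ?thesis
      using n small quilt_small[of "n + 1"] unfolding greedy_successes_def by auto
  qed
  then show ?thesis using card_greedy_successes[of n] by simp
qed

theorem mainTheorem13:
  shows "(\<forall>k. 1 \<le> k \<and> k \<le> 5 \<longrightarrow> h k = k)
       \<and> (\<forall>n\<ge>6. h n = h (n - 1) + h (n - 5) + 1)"
  using h_small h_rec by blast

end
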